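(* Let $D\subset\mathbb N^n$ be finite, not contained in any coordinate hyperplane, and $p$ a prime. Then (i) the sets $MI_{D,p}(r)$, $r\ge1$, are pairwise disjoint; (ii) $MI_{D,p}(r)$ is empty for $r$ large enough; (iii) $\delta_r$ maps $MI_{D,p}(r)$ to itself, and for all $i,k$ and $U\in MI_{D,p}(r)$, $\varphi_{\delta_r^kU}(i)=\varphi_U(i+k)$.
   Context: $s_p$ = base-$p$ digit sum. $E_{D,p}(r)$ = set of $U=(u_{\mathbf d})_{\mathbf d\in D}\in\{0,\dots,p^r-1\}^D$ with $\sum u_{\mathbf d}\mathbf d\equiv0\pmod{p^r-1}$ and all coordinates of $\sum u_{\mathbf d}\mathbf d$ positive; $s_p(U)=\sum s_p(u_{\mathbf d})$; $\delta_p(D)=\frac1{p-1}\min_{r\ge1}\min_{U\in E_{D,p}(r)}s_p(U)/r$; $U\in E_{D,p}(r)$ is minimal if $s_p(U)=(p-1)r\delta_p(D)$. The shift $\delta_r$ on $\{0,\dots,p^r-1\}$ sends $k\le p^r-2$ to $pk\bmod(p^r-1)$ and fixes $p^r-1$, applied coordinatewise. For $U\in E_{D,p}(r)$, $\varphi_U:\mathbb Z/r\mathbb Z\to\mathbb N_{>0}^n$, $\varphi_U(k)=\frac1{p^r-1}\sum_{\mathbf d}\mathbf d(\delta_r^kU)_{\mathbf d}$; $U$ is irreducible if $\varphi_U$ is injective; $MI_{D,p}(r)$ is the set of minimal irreducible elements of $E_{D,p}(r)$. *)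

theory Defs
  imports Main "HOL-Computational_Algebra.Primes" Complex_Main
begin

text \<open>Vectors in N^n are functions of type 'n \<Rightarrow> nat for a finite index type 'n.
  A tuple U = (u_d)_{d in D} is a function ('n \<Rightarrow> nat) \<Rightarrow> nat that vanishes outside D.\<close>

function digsum :: "nat \<Rightarrow> nat \<Rightarrow> nat" where
  "digsum p k = (if p < 2 \<or> k = 0 then 0 else k mod p + digsum p (k div p))"
  by auto
termination by (relation "measure snd") auto

definition sU :: "('n \<Rightarrow> nat) set \<Rightarrow> nat \<Rightarrow> (('n \<Rightarrow> nat) \<Rightarrow> nat) \<Rightarrow> nat" where
  "sU D p U = (\<Sum>d\<in>D. digsum p (U d))"

definition vsum :: "('n \<Rightarrow> nat) set \<Rightarrow> (('n \<Rightarrow> nat) \<Rightarrow> nat) \<Rightarrow> 'n \<Rightarrow> nat" where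
  "vsum D U = (\<lambda>i. \<Sum>d\<in>D. U d * d i)"

definition E :: "('n \<Rightarrow> nat) set \<Rightarrow> nat \<Rightarrow> nat \<Rightarrow> (('n \<Rightarrow> nat) \<Rightarrow> nat) set" where
  "E D p r = {U. 1 \<le> r \<and> (\<forall>d\<in>D. U d \<le> p ^ r - 1) \<and> (\<forall>d. d \<notin> D \<longrightarrow> U d = 0)
      \<and> (\<forall>i. (p ^ r - 1) dvd vsum D U i \<and> 0 < vsum D U i)}"

definition delta :: "('n \<Rightarrow> nat) set \<Rightarrow> nat \<Rightarrow> real" where
  "delta D p = Inf {real (sU D p U) / real r | r U. 1 \<le> r \<and> U \<in> E D p r} / real (p - 1)"

definition minimal :: "('n \<Rightarrow> nat) set \<Rightarrow> nat \<Rightarrow> nat \<Rightarrow> (('n \<Rightarrow> nat) \<Rightarrow> nat) \<Rightarrow> bool" where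
  "minimal D p r U \<longleftrightarrow> U \<in> E D p r \<and> real (sU D p U) = real (p - 1) * real r * delta D p"

text \<open>the shift delta_r on {0..p^r-1}\<close>
definition shiftnum :: "nat \<Rightarrow> nat \<Rightarrow> nat \<Rightarrow> nat" where
  "shiftnum p r k = (if k \<le> p ^ r - 2 then (p * k) mod (p ^ r - 1) else k)"

definition shiftU :: "nat \<Rightarrow> nat \<Rightarrow> (('n \<Rightarrow> nat) \<Rightarrow> nat) \<Rightarrow> (('n \<Rightarrow> nat) \<Rightarrow> nat)" where
  "shiftU p r U = (\<lambda>d. shiftnum p r (U d))"

text \<open>phi_U, with Z/rZ represented by nat (phi_U is r-periodic)\<close>
definition phi :: "('n \<Rightarrow> nat) set \<Rightarrow> nat \<Rightarrow> nat \<Rightarrow> (('n \<Rightarrow> nat) \<Rightarrow> nat) \<Rightarrow> nat \<Rightarrow> ('n \<Rightarrow> nat)" where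
  "phi D p r U k = (\<lambda>i. vsum D ((shiftU p r ^^ k) U) i div (p ^ r - 1))"

definition irreducible_U :: "('n \<Rightarrow> nat) set \<Rightarrow> nat \<Rightarrow> nat \<Rightarrow> (('n \<Rightarrow> nat) \<Rightarrow> nat) \<Rightarrow> bool" where
  "irreducible_U D p r U \<longleftrightarrow> inj_on (phi D p r U) {0..<r}"

definition MI :: "('n \<Rightarrow> nat) set \<Rightarrow> nat \<Rightarrow> nat \<Rightarrow> (('n \<Rightarrow> nat) \<Rightarrow> nat) set" where
  "MI D p r = {U \<in> E D p r. minimal D p r U \<and> irreducible_U D p r U}"

end

theory Submission
  imports Defs "HOL-Number_Theory.Cong" "HOL-Library.FuncSet"
begin

text \<open>
  The shift multiplies by \<open>p\<close> modulo \<open>p\<^sup>r - 1\<close>, i.e. it rotates the \<open>r\<close> base-\<open>p\<close> digits of each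
  coordinate. Hence it preserves the digit sum and, since \<open>p\<close> is a unit modulo \<open>p\<^sup>r - 1\<close>,
  the defining congruences and positivity of \<open>E\<^sub>D\<^sub>,\<^sub>p(r)\<close>; it has period \<open>r\<close>, so \<open>\<phi>\<^sub>\<delta>\<^sub>U\<close> is \<open>\<phi>\<^sub>U\<close>
  rotated by one step. A minimal \<open>U \<in> E\<^sub>D\<^sub>,\<^sub>p(r)\<close> has digit sum \<open>(p - 1) r \<delta>\<^sub>p(D) > 0\<close>, which
  determines \<open>r\<close>. Finally \<open>\<phi>\<^sub>U\<close> takes values in the finite box \<open>\<Prod>\<^sub>i [0, \<Sum>\<^sub>d d\<^sub>i]\<close>, so
  irreducibility forces \<open>r\<close> to be at most the size of that box.
\<close>

declare digsum.simps[simp del]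

lemma digsum_rec: "p \<ge> 2 \<Longrightarrow> digsum p k = k mod p + digsum p (k div p)"
  by (cases "k = 0") (simp_all add: digsum.simps)

lemma digsum_eq_0_iff: "p \<ge> 2 \<Longrightarrow> digsum p k = 0 \<longleftrightarrow> k = 0"
proof (induction p k rule: digsum.induct)
  case (1 p k)
  show ?case
  proof (cases "k = 0")
    case False
    have "k = k div p * p + k mod p" by simp
    moreover have "digsum p (k div p) = 0 \<longleftrightarrow> k div p = 0" using 1 False by simp
    ultimately show ?thesis using 1 False digsum_rec[of p k] by (auto simp: div_eq_0_iff)
  qed (simp add: digsum.simps)
qed

lemma digsum_leading_digit:
  assumes "p \<ge> 2" "a < p" "b < p ^ m"
  shows "digsum p (a * p ^ m + b) = a + digsum p b"
  using assms(3)
proof (induction m arbitrary: b)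
  case 0
  then show ?case using assms digsum_rec[of p a] by simp
next
  case (Suc m)
  have "(a * p ^ Suc m + b) div p = a * p ^ m + b div p"
    using assms(1) by (simp add: div_add1_eq)
  moreover have "(a * p ^ Suc m + b) mod p = b mod p"
    by (simp add: mod_add_left_eq[symmetric])
  moreover have "b div p < p ^ m"
    using Suc.prems assms(1) by (simp add: div_less_iff_less_mult mult.commute)
  ultimately show ?case
    using Suc.IH digsum_rec[of p "a * p ^ Suc m + b"] digsum_rec[of p b] assms(1) by simp
qed

lemma coprime_power_minus_one:
  assumes "(p::nat) \<ge> 1" "r \<ge> 1"
  shows "coprime (p ^ r - 1) p"
proof -
  have "Suc (p ^ r - 1) = p * p ^ (r - 1)"
    using assms by (simp flip: power_Suc)
  then have "coprime (p ^ r - 1) (p * p ^ (r - 1))"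
    using coprime_Suc_right_nat[of "p ^ r - 1"] by simp
  then show ?thesis by simp
qed

lemma vsum_pos_iff:
  "finite D \<Longrightarrow> 0 < vsum D V i \<longleftrightarrow> (\<exists>d\<in>D. 0 < V d \<and> 0 < d i)"
  unfolding vsum_def by (auto simp: zero_less_iff_neq_zero simp del: neq0_conv)

lemma E_le: "U \<in> E D p r \<Longrightarrow> U d \<le> p ^ r - 1"
  unfolding E_def by (cases "d \<in> D") auto

lemma vsum_le_E:
  assumes "U \<in> E D p r"
  shows "vsum D U i \<le> (p ^ r - 1) * (\<Sum>d\<in>D. d i)"
proof -
  have "U d * d i \<le> (p ^ r - 1) * d i" for d using E_le[OF assms] by simp
  then show ?thesis unfolding vsum_def sum_distrib_left by (rule sum_mono)
qed

lemma sU_pos_E: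
  assumes "p \<ge> 2" "finite D" "U \<in> E D p r"
  shows "0 < sU D p U"
proof -
  obtain d where d: "d \<in> D" "0 < U d"
    using assms(3) vsum_pos_iff[OF assms(2)] unfolding E_def by blast
  have "0 < digsum p (U d)" using d(2) digsum_eq_0_iff[OF assms(1)] by (metis neq0_conv)
  also have "\<dots> \<le> sU D p U" unfolding sU_def using d(1) assms(2) by (intro member_le_sum) auto
  finally show ?thesis .
qed

lemma inj_on_rotate:
  assumes "inj_on f {0..<r}" and "f r = f 0"
  shows "inj_on (\<lambda>k. f (Suc k)) {0..<r}"
proof (rule inj_onI)
  fix i j assume ij: "i \<in> {0..<r}" "j \<in> {0..<r}" "f (Suc i) = f (Suc j)"
  have "f (Suc k) = f (Suc k mod r)" if "k < r" for k
    using that assms(2) by (cases "Suc k = r") auto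
  then have "f (Suc i mod r) = f (Suc j mod r)" using ij by auto
  then have "Suc i mod r = Suc j mod r" using assms(1) ij(1) by (auto dest: inj_onD)
  then show "i = j" using ij(1,2) by (auto simp: mod_Suc split: if_splits)
qed

lemma phi_shiftU: "phi D p r (shiftU p r U) k = phi D p r U (Suc k)"
  unfolding phi_def by (simp only: funpow_Suc_right comp_def)

lemma phi_funpow_shiftU: "phi D p r ((shiftU p r ^^ k) U) i = phi D p r U (i + k)"
  unfolding phi_def by (simp add: funpow_add)

lemma minimal_length_unique:
  assumes "p \<ge> 2" "finite D" "minimal D p r1 U" "minimal D p r2 U"
  shows "r1 = r2"
proof -
  have sU: "real (sU D p U) = (real (p - 1) * delta D p) * real r" if "minimal D p r U" for r
    using that unfolding minimal_def by (simp add: ac_simps)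
  have "0 < sU D p U" using assms sU_pos_E unfolding minimal_def by blast
  then have "real (p - 1) * delta D p \<noteq> 0" using sU[OF assms(3)] by auto
  then show ?thesis using sU[OF assms(3)] sU[OF assms(4)] by simp
qed

context
  fixes p r :: nat
  assumes p2: "p \<ge> 2" and r1: "r \<ge> 1"
begin

lemma power_minus_one_pos: "p ^ r - 1 \<ge> 1"
  using p2 r1 power_increasing[of 1 r p] by simp

lemma shiftnum_le: "u \<le> p ^ r - 1 \<Longrightarrow> shiftnum p r u \<le> p ^ r - 1"
  using power_minus_one_pos by (auto simp: shiftnum_def intro: less_imp_le)

lemma shiftnum_cong: "u \<le> p ^ r - 1 \<Longrightarrow> [shiftnum p r u = p * u] (mod (p ^ r - 1))"
proof (cases "u \<le> p ^ r - 2")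
  case False
  assume "u \<le> p ^ r - 1"
  then have "u = p ^ r - 1" using False by linarith
  then show ?thesis by (simp add: shiftnum_def cong_def)
qed (simp add: shiftnum_def cong_def)

lemma shiftnum_pos:
  assumes "u \<le> p ^ r - 1" "0 < u"
  shows "0 < shiftnum p r u"
proof (rule ccontr)
  assume "\<not> 0 < shiftnum p r u"
  then have lt: "u < p ^ r - 1" and "(p * u) mod (p ^ r - 1) = 0"
    using assms by (auto simp: shiftnum_def split: if_splits)
  then have "(p ^ r - 1) dvd u"
    using coprime_power_minus_one[of p r] p2 r1 coprime_dvd_mult_right_iff by auto
  then show False using lt assms(2) by (simp add: nat_dvd_not_less)
qed

lemma funpow_shiftnum:
  "u < p ^ r - 1 \<Longrightarrow> (shiftnum p r ^^ k) u = (p ^ k * u) mod (p ^ r - 1)"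
proof (induction k)
  case (Suc k)
  have "(p ^ k * u) mod (p ^ r - 1) < p ^ r - 1" using power_minus_one_pos by simp
  then have "(p ^ k * u) mod (p ^ r - 1) \<le> p ^ r - 2" by linarith
  then show ?case using Suc by (simp add: shiftnum_def mod_mult_right_eq mult.assoc)
qed simp

lemma funpow_shiftnum_period: "u \<le> p ^ r - 1 \<Longrightarrow> (shiftnum p r ^^ r) u = u"
proof (cases "u = p ^ r - 1")
  case True
  then have "(shiftnum p r ^^ k) u = u" for k
    by (induction k) (simp_all add: shiftnum_def)
  then show ?thesis .
next
  case False
  assume "u \<le> p ^ r - 1"
  then have lt: "u < p ^ r - 1" using False by simp
  obtain N where "p ^ r = Suc N" using power_minus_one_pos by (cases "p ^ r") auto
  then have "p ^ r * u = u + u * (p ^ r - 1)" by simp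
  then show ?thesis using funpow_shiftnum[OF lt] lt by simp
qed

text \<open>Writing \<open>u = a p\<^sup>r\<^sup>-\<^sup>1 + b\<close> with leading digit \<open>a\<close>, we get \<open>p u \<equiv> a + p b\<close>, a cyclic rotation of digits.\<close>

lemma digsum_shiftnum: "u \<le> p ^ r - 1 \<Longrightarrow> digsum p (shiftnum p r u) = digsum p u"
proof (cases "u \<le> p ^ r - 2")
  case True
  define N where "N = p ^ r - 1"
  define a where "a = u div p ^ (r - 1)"
  define b where "b = u mod p ^ (r - 1)"
  have pr: "p ^ r = p * p ^ (r - 1)" using r1 by (simp flip: power_Suc)
  have ulN: "u < N" using True power_minus_one_pos unfolding N_def by linarith
  have u: "u = a * p ^ (r - 1) + b" unfolding a_def b_def by (metis div_mult_mod_eq)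
  have blt: "b < p ^ (r - 1)" unfolding b_def using p2 by simp
  have alt: "a < p" unfolding a_def using ulN pr N_def p2 by (simp add: div_less_iff_less_mult)
  have "p * p ^ (r - 1) = N + 1" using pr power_minus_one_pos unfolding N_def by simp
  moreover have "p * u = a * (p * p ^ (r - 1)) + p * b" unfolding u by (simp add: algebra_simps)
  ultimately have pu: "p * u = (a + p * b) + a * N" by simp
  have "a + p * b \<le> N"
  proof -
    have "b \<le> p ^ (r - 1) - 1" using blt by linarith
    then have "p * b \<le> p * (p ^ (r - 1) - 1)" by simp
    then have "p * b \<le> p ^ r - p" using pr by (simp add: right_diff_distrib')
    moreover have "p \<le> p ^ r" using pr p2 by simp
    ultimately show ?thesis using alt unfolding N_def by linarith
  qed
  moreover have "a + p * b \<noteq> N"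
  proof
    assume "a + p * b = N"
    then have "N dvd p * u" using pu by simp
    then have "N dvd u"
      using coprime_power_minus_one[of p r] p2 r1 coprime_dvd_mult_right_iff unfolding N_def by auto
    then have "u = 0" using ulN by (metis dvd_imp_le neq0_conv not_less)
    then show False using \<open>a + p * b = N\<close> power_minus_one_pos unfolding a_def b_def N_def by simp
  qed
  ultimately have "shiftnum p r u = a + p * b"
    using True pu unfolding shiftnum_def N_def by simp
  moreover have "digsum p (a + p * b) = a + digsum p b"
    using digsum_rec[of p "a + p * b"] p2 alt by simp
  moreover have "digsum p u = a + digsum p b"
    unfolding u by (rule digsum_leading_digit[OF p2 alt blt])
  ultimately show ?thesis by simp
qed (simp add: shiftnum_def)

lemma vsum_shiftU_cong:
  assumes "U \<in> E D p r"
  shows "[vsum D (shiftU p r U) i = p * vsum D U i] (mod (p ^ r - 1))"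
proof -
  have "[vsum D (shiftU p r U) i = (\<Sum>d\<in>D. (p * U d) * d i)] (mod (p ^ r - 1))"
    unfolding vsum_def shiftU_def by (intro cong_sum cong_mult shiftnum_cong E_le[OF assms] cong_refl)
  then show ?thesis by (simp add: vsum_def sum_distrib_left mult.assoc)
qed

lemma shiftU_in_E:
  assumes "finite D" "U \<in> E D p r"
  shows "shiftU p r U \<in> E D p r"
proof -
  have dvd: "(p ^ r - 1) dvd vsum D U i" and pos: "0 < vsum D U i" for i
    using assms(2) unfolding E_def by auto
  have "(p ^ r - 1) dvd vsum D (shiftU p r U) i" for i
    using vsum_shiftU_cong[OF assms(2), of i] dvd[of i] by (metis cong_dvd_iff dvd_mult)
  moreover have "0 < vsum D (shiftU p r U) i" for i
  proof -
    obtain d where "d \<in> D" "0 < U d" "0 < d i"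
      using pos[of i] vsum_pos_iff[OF assms(1)] by blast
    then show ?thesis
      using shiftnum_pos[OF E_le[OF assms(2)]] vsum_pos_iff[OF assms(1)]
      unfolding shiftU_def by blast
  qed
  moreover have "shiftU p r U d \<le> p ^ r - 1" for d
    unfolding shiftU_def by (rule shiftnum_le[OF E_le[OF assms(2)]])
  moreover have "shiftU p r U d = 0" if "d \<notin> D" for d
    using assms(2) that unfolding E_def shiftU_def by (simp add: shiftnum_def)
  ultimately show ?thesis using r1 unfolding E_def by blast
qed

lemma funpow_shiftU_in_E: "finite D \<Longrightarrow> U \<in> E D p r \<Longrightarrow> (shiftU p r ^^ k) U \<in> E D p r"
  by (induction k) (simp_all add: shiftU_in_E)

lemma sU_shiftU:
  assumes "U \<in> E D p r"
  shows "sU D p (shiftU p r U) = sU D p U"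
  unfolding sU_def shiftU_def using digsum_shiftnum[OF E_le[OF assms]] by simp

lemma funpow_shiftU_period:
  assumes "U \<in> E D p r"
  shows "(shiftU p r ^^ r) U = U"
proof -
  have "(shiftU p r ^^ k) U = (\<lambda>d. (shiftnum p r ^^ k) (U d))" for k
    by (induction k) (auto simp: shiftU_def)
  then show ?thesis using funpow_shiftnum_period[OF E_le[OF assms]] by auto
qed

lemma irreducible_U_shiftU:
  assumes "U \<in> E D p r" "irreducible_U D p r U"
  shows "irreducible_U D p r (shiftU p r U)"
proof -
  have "phi D p r U r = phi D p r U 0"
    unfolding phi_def using funpow_shiftU_period[OF assms(1)] by simp
  then show ?thesis
    using inj_on_rotate assms(2) unfolding irreducible_U_def phi_shiftU by blast
qed

lemma shiftU_MI:
  assumes "finite D"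
  shows "shiftU p r ` MI D p r \<subseteq> MI D p r"
proof
  fix V assume "V \<in> shiftU p r ` MI D p r"
  then obtain U where U: "U \<in> MI D p r" and V: "V = shiftU p r U" by blast
  then have E: "U \<in> E D p r" unfolding MI_def by simp
  show "V \<in> MI D p r"
    using U shiftU_in_E[OF assms E] sU_shiftU[OF E] irreducible_U_shiftU[OF E]
    unfolding V MI_def minimal_def by simp
qed

lemma phi_le:
  assumes "finite D" "U \<in> E D p r"
  shows "phi D p r U k i \<le> (\<Sum>d\<in>D. d i)"
proof -
  have "phi D p r U k i \<le> (p ^ r - 1) * (\<Sum>d\<in>D. d i) div (p ^ r - 1)"
    unfolding phi_def by (rule div_le_mono, rule vsum_le_E, rule funpow_shiftU_in_E[OF assms])
  then show ?thesis using power_minus_one_pos by simp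
qed

end

lemma MI_length_le_card:
  fixes D :: "('n::finite \<Rightarrow> nat) set"
  assumes "p \<ge> 2" "finite D" "U \<in> MI D p r"
  shows "r \<le> card (Pi UNIV (\<lambda>i. {..\<Sum>d\<in>D. d i}))"
proof -
  have E: "U \<in> E D p r" and inj: "inj_on (phi D p r U) {0..<r}" and "r \<ge> 1"
    using assms(3) unfolding MI_def irreducible_U_def E_def by auto
  have "phi D p r U ` {0..<r} \<subseteq> Pi UNIV (\<lambda>i. {..\<Sum>d\<in>D. d i})"
    using phi_le[OF assms(1) \<open>r \<ge> 1\<close> assms(2) E] by auto
  moreover have "finite (Pi UNIV (\<lambda>i. {..\<Sum>d\<in>D. d i}))"
    by (metis PiE_UNIV_domain finite_PiE finite_atMost finite_UNIV)
  ultimately show ?thesis using card_inj_on_le[OF inj] by fastforce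
qed

text \<open>The hypothesis that no coordinate vanishes on all of \<open>D\<close> only ensures \<open>E\<^sub>D\<^sub>,\<^sub>p(r) \<noteq> {}\<close>.\<close>

theorem lemma2p9:
  fixes D :: "('n::finite \<Rightarrow> nat) set" and p :: nat
  assumes "finite D" and "\<forall>i. \<exists>d\<in>D. d i \<noteq> 0" and "prime p"
  shows "(\<forall>r1 r2. 1 \<le> r1 \<longrightarrow> 1 \<le> r2 \<longrightarrow> r1 \<noteq> r2 \<longrightarrow> MI D p r1 \<inter> MI D p r2 = {})
    \<and> (\<exists>R. \<forall>r\<ge>R. MI D p r = {})
    \<and> (\<forall>r\<ge>1. shiftU p r ` MI D p r \<subseteq> MI D p r
         \<and> (\<forall>U\<in>MI D p r. \<forall>i k. phi D p r ((shiftU p r ^^ k) U) i = phi D p r U (i + k)))"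
proof -
  have p2: "p \<ge> 2" using assms(3) prime_ge_2_nat by blast
  have "MI D p r1 \<inter> MI D p r2 = {}" if "r1 \<noteq> r2" for r1 r2
    using minimal_length_unique[OF p2 assms(1)] that unfolding MI_def by blast
  moreover have "MI D p r = {}" if "r > card (Pi UNIV (\<lambda>i. {..\<Sum>d\<in>D. d i}))" for r
    using MI_length_le_card[OF p2 assms(1)] that by fastforce
  moreover have "shiftU p r ` MI D p r \<subseteq> MI D p r" if "r \<ge> 1" for r
    using shiftU_MI[OF p2 that assms(1)] .
  ultimately show ?thesis
    using phi_funpow_shiftU by (metis Suc_le_eq)
qed

end
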